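(* Let $X$ be a finite connected $s$-regular graph with vertex set $X^0$, edge set $X^1$, and let $\lambda_2$ be the second largest eigenvalue of its adjacency matrix. Let $0<\alpha\le 1$ and let $E\subset X^1$ with $|E|\le\alpha|X^1|$. Let $\Gamma(E)\subset X^0$ be the set of vertices incident to some edge of $E$. Then $|\Gamma(E)|\ge\beta|E|$, where $$\beta=\frac{\sqrt{\lambda_2^2+4s(s-\lambda_2)\alpha}-\lambda_2}{s(s-\lambda_2)\alpha}.$$ *)

theory Defs
  imports "Jordan_Normal_Form.Char_Poly" "HOL-Library.Multiset"
begin

definition simple_graph :: "nat \<Rightarrow> (nat \<Rightarrow> nat \<Rightarrow> bool) \<Rightarrow> bool" where
  "simple_graph n adj \<longleftrightarrow>
     (\<forall>u v. adj u v \<longrightarrow> u < n \<and> v < n) \<and>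
     (\<forall>u v. adj u v \<longrightarrow> adj v u) \<and> (\<forall>u. \<not> adj u u)"

definition graph_edges :: "nat \<Rightarrow> (nat \<Rightarrow> nat \<Rightarrow> bool) \<Rightarrow> nat set set" where
  "graph_edges n adj = {{u, v} | u v. u < n \<and> v < n \<and> adj u v}"

definition regular_graph :: "nat \<Rightarrow> (nat \<Rightarrow> nat \<Rightarrow> bool) \<Rightarrow> nat \<Rightarrow> bool" where
  "regular_graph n adj s \<longleftrightarrow> (\<forall>u < n. card {v. v < n \<and> adj u v} = s)"

definition connected_graph :: "nat \<Rightarrow> (nat \<Rightarrow> nat \<Rightarrow> bool) \<Rightarrow> bool" where
  "connected_graph n adj \<longleftrightarrow> (\<forall>u < n. \<forall>v < n. adj\<^sup>*\<^sup>* u v)"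

definition adjacency_matrix :: "nat \<Rightarrow> (nat \<Rightarrow> nat \<Rightarrow> bool) \<Rightarrow> real mat" where
  "adjacency_matrix n adj = mat n n (\<lambda>(i, j). if adj i j then 1 else 0)"

definition eigenvalues_desc :: "real mat \<Rightarrow> real list" where
  "eigenvalues_desc A = rev (sorted_list_of_multiset (proots (char_poly A)))"

definition second_largest_eigenvalue :: "real mat \<Rightarrow> real" where
  "second_largest_eigenvalue A = eigenvalues_desc A ! 1"

definition incident_vertices :: "nat set set \<Rightarrow> nat set" where
  "incident_vertices E = \<Union> E"

end

theory Submission
  imports Defs
begin

text \<open>Write A for the adjacency matrix, l for its second largest eigenvalue and 1 for the
  all-ones vector, an eigenvector for the top eigenvalue s. By the spectral theorem (proved below
  by Householder deflation), every vector orthogonal to 1 has Rayleigh quotient at most l. Testing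
  this on the indicator of F = \<Gamma>(E) with its mean removed bounds the number of ordered adjacent
  pairs inside F, which is at least 2|E|, by l |F| + (s - l) |F|^2 / n. Together with
  2|E| \<le> \<alpha> n s this is a quadratic inequality for |F| / |E| whose positive root is \<beta>.\<close>

section \<open>The spectral theorem for real symmetric matrices\<close>

text \<open>Reflection in the hyperplane orthogonal to w = v - e_0; for a unit vector v it swaps e_0 and v.
  When v = e_0 the junk value 2/0 = 0 makes it the identity, which is again the right matrix.\<close>
definition householder :: "nat \<Rightarrow> real vec \<Rightarrow> real mat" where
  "householder n v = (let w = (\<lambda>i. v $ i - (if i = 0 then 1 else 0)); c = 2 / (\<Sum>k<n. (w k)\<^sup>2)
     in mat n n (\<lambda>(i, j). (if i = j then 1 else 0) - c * w i * w j))"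

lemma householder_carrier [simp]: "householder n v \<in> carrier_mat n n"
  unfolding householder_def Let_def by auto

lemma transpose_householder [simp]: "(householder n v)\<^sup>T = householder n v"
  unfolding householder_def Let_def by (rule eq_matI) auto

lemma householder_mult_self: "householder n v * householder n v = 1\<^sub>m n"
proof -
  define w where "w = (\<lambda>i. v $ i - (if i = 0 then 1 else 0 :: real))"
  define c where "c = 2 / (\<Sum>k<n. (w k)\<^sup>2)"
  have H: "householder n v = mat n n (\<lambda>(i, j). (if i = j then 1 else 0) - c * w i * w j)"
    unfolding householder_def Let_def w_def c_def ..
  have c: "c * c * (\<Sum>k<n. (w k)\<^sup>2) = 2 * c"
    unfolding c_def by (cases "(\<Sum>k<n. (w k)\<^sup>2) = 0") (auto simp: field_simps)
  show ?thesis
  proof (rule eq_matI)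
    fix i j assume "i < dim_row (1\<^sub>m n)" "j < dim_col (1\<^sub>m n)"
    hence i: "i < n" and j: "j < n" by auto
    have "(householder n v * householder n v) $$ (i, j) =
        (\<Sum>k<n. ((if i = k then 1 else 0) - c * w i * w k) * ((if k = j then 1 else 0) - c * w k * w j))"
      using i j unfolding H by (simp add: scalar_prod_def atLeast0LessThan)
    also have "\<dots> = (\<Sum>k<n. (if i = k then 1 else 0) * (if k = j then 1 else 0))
        - (\<Sum>k<n. (if i = k then 1 else 0) * (c * w k * w j))
        - (\<Sum>k<n. (if k = j then 1 else 0) * (c * w i * w k))
        + w i * w j * (c * c * (\<Sum>k<n. (w k)\<^sup>2))"
      by (simp add: algebra_simps sum.distrib sum_subtractf sum_distrib_left power2_eq_square)
    also have "\<dots> = (if i = j then 1 else 0) - 2 * c * w i * w j + w i * w j * (c * c * (\<Sum>k<n. (w k)\<^sup>2))"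
      using i j by (simp add: if_distrib[of "\<lambda>x. x * _"] sum.delta sum.delta' cong: if_cong)
    finally show "(householder n v * householder n v) $$ (i, j) = 1\<^sub>m n $$ (i, j)"
      using i j c by simp
  qed (auto simp: householder_def)
qed

lemma col_householder_0:
  assumes v: "v \<in> carrier_vec n" and unit: "v \<bullet> v = 1" and n: "0 < n"
  shows "col (householder n v) 0 = v"
proof -
  define w where "w = (\<lambda>i. v $ i - (if i = 0 then 1 else 0 :: real))"
  define S where "S = (\<Sum>k<n. (w k)\<^sup>2)"
  have H: "householder n v = mat n n (\<lambda>(i, j). (if i = j then 1 else 0) - 2 / S * w i * w j)"
    unfolding householder_def Let_def w_def S_def ..
  have "S = (\<Sum>k<n. (v $ k)\<^sup>2 - 2 * (if k = 0 then v $ k else 0) + (if k = 0 then 1 else 0))"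
    unfolding S_def w_def by (intro sum.cong refl) (auto simp: power2_eq_square algebra_simps)
  also have "\<dots> = v \<bullet> v - 2 * v $ 0 + 1"
    using v n by (simp add: sum.distrib sum_subtractf sum_distrib_left[symmetric] scalar_prod_def atLeast0LessThan power2_eq_square)
  finally have S: "S = 2 - 2 * v $ 0" using unit by simp
  show ?thesis
  proof (rule eq_vecI)
    fix i assume "i < dim_vec v"
    hence i: "i < n" using v by auto
    show "col (householder n v) 0 $ i = v $ i"
    proof (cases "S = 0")
      case True
      hence "w i = 0" using i unfolding S_def by (subst (asm) sum_nonneg_eq_0_iff) auto
      thus ?thesis using i n True unfolding H w_def by (auto split: if_splits)
    next
      case False
      hence "2 / S * w 0 = -1" unfolding w_def using S by (simp add: field_simps)
      hence "2 / S * w i * w 0 = - w i" by (metis mult.commute mult.left_commute mult_minus1_right)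
      thus ?thesis using i n unfolding H w_def by auto
    qed
  qed (use v in \<open>auto simp: householder_def\<close>)
qed

lemma symmetric_mat_complex_eigenvalue_real:
  fixes A :: "real mat"
  assumes A: "A \<in> carrier_mat n n" and sym: "A\<^sup>T = A"
    and ev: "eigenvector (map_mat complex_of_real A) v z"
  shows "z \<in> \<real>"
proof -
  let ?B = "map_mat complex_of_real A"
  have v: "v \<in> carrier_vec n" "v \<noteq> 0\<^sub>v n" and Bv: "?B *\<^sub>v v = z \<cdot>\<^sub>v v"
    using ev A unfolding eigenvector_def by auto
  have Aij: "A $$ (i, j) = A $$ (j, i)" if "i < n" "j < n" for i j
    using arg_cong[OF sym, of "\<lambda>M. M $$ (j, i)"] that A by auto
  \<comment> \<open>The Hermitian form q = v* A v is real and equals z |v|^2.\<close>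
  define q where "q = (\<Sum>i<n. \<Sum>j<n. cnj (v $ i) * of_real (A $$ (i, j)) * v $ j)"
  define N where "N = (\<Sum>i<n. cnj (v $ i) * v $ i)"
  have "q = (\<Sum>i<n. cnj (v $ i) * (?B *\<^sub>v v) $ i)"
    unfolding q_def using A v(1)
    by (auto simp: scalar_prod_def atLeast0LessThan sum_distrib_left mult.assoc intro!: sum.cong)
  also have "\<dots> = z * N"
    unfolding N_def Bv using v(1) by (auto simp: sum_distrib_left algebra_simps intro!: sum.cong)
  finally have q: "q = z * N" .
  have "cnj q = (\<Sum>i<n. \<Sum>j<n. v $ i * of_real (A $$ (i, j)) * cnj (v $ j))"
    unfolding q_def by simp
  also have "\<dots> = (\<Sum>j<n. \<Sum>i<n. v $ i * of_real (A $$ (i, j)) * cnj (v $ j))"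
    by (rule sum.swap)
  also have "\<dots> = q"
    unfolding q_def by (intro sum.cong refl) (simp add: Aij mult.commute mult.left_commute)
  finally have "cnj q = q" .
  moreover have N: "N = of_real (\<Sum>i<n. (cmod (v $ i))\<^sup>2)"
    unfolding N_def of_real_sum by (intro sum.cong refl) (metis complex_norm_square mult.commute of_real_power)
  moreover have "N \<noteq> 0"
  proof
    assume "N = 0"
    obtain i where i: "i < n" "v $ i \<noteq> 0"
      using v by (metis carrier_vecD eq_vecI index_zero_vec(1,2))
    have "(\<Sum>i<n. (cmod (v $ i))\<^sup>2) = 0" using \<open>N = 0\<close> N by (metis of_real_eq_0_iff)
    hence "(cmod (v $ i))\<^sup>2 = 0" using i by (subst (asm) sum_nonneg_eq_0_iff) auto
    thus False using i by simp
  qed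
  ultimately have "cnj z * N = z * N" using q by (metis complex_cnj_complex_of_real complex_cnj_mult)
  thus ?thesis using \<open>N \<noteq> 0\<close> by (simp add: Reals_cnj_iff)
qed

lemma symmetric_mat_has_eigenvalue:
  fixes A :: "real mat"
  assumes A: "A \<in> carrier_mat n n" and sym: "A\<^sup>T = A" and n: "0 < n"
  shows "\<exists>e. eigenvalue A e"
proof -
  let ?B = "map_mat complex_of_real A"
  have B: "?B \<in> carrier_mat n n" using A by auto
  obtain zs where zs: "char_poly ?B = (\<Prod>a\<leftarrow>zs. [:- a, 1:])" "length zs = n"
    using char_poly_factorized[OF B] by blast
  then obtain z where "z \<in> set zs" using n by (cases zs) auto
  hence "poly (char_poly ?B) z = 0" unfolding zs(1) by (simp add: poly_prod_list prod_list_zero_iff)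
  then obtain v where v: "eigenvector ?B v z"
    using eigenvalue_root_char_poly[OF B] unfolding eigenvalue_def by blast
  then obtain e where e: "z = of_real e"
    using symmetric_mat_complex_eigenvalue_real[OF A sym] by (metis Reals_cases)
  have cp: "char_poly ?B = map_poly of_real (char_poly A)"
    using of_real_hom.char_poly_hom[OF A] by simp
  have "of_real (poly (char_poly A) e) = poly (char_poly ?B) z"
    by (simp add: cp e)
  also have "\<dots> = 0" using \<open>poly (char_poly ?B) z = 0\<close> .
  finally have "poly (char_poly A) e = 0" by simp
  thus ?thesis using eigenvalue_root_char_poly[OF A] by blast
qed

lemma symmetric_mat_has_unit_eigenvector:
  fixes A :: "real mat"
  assumes A: "A \<in> carrier_mat n n" and sym: "A\<^sup>T = A" and n: "0 < n"
  obtains e v where "v \<in> carrier_vec n" "v \<bullet> v = 1" "A *\<^sub>v v = e \<cdot>\<^sub>v v"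
proof -
  obtain e w where "eigenvector A w e"
    using symmetric_mat_has_eigenvalue[OF A sym n] unfolding eigenvalue_def by blast
  hence w: "w \<in> carrier_vec n" "w \<noteq> 0\<^sub>v n" and Aw: "A *\<^sub>v w = e \<cdot>\<^sub>v w"
    unfolding eigenvector_def using A by auto
  have "0 < w \<bullet> w" using conjugate_square_greater_0_vec[OF w(1)] w(2) by simp
  define v where "v = (1 / sqrt (w \<bullet> w)) \<cdot>\<^sub>v w"
  have "v \<in> carrier_vec n" "v \<bullet> v = 1"
    unfolding v_def using w(1) \<open>0 < w \<bullet> w\<close>
    by (simp_all add: smult_scalar_prod_distrib scalar_prod_smult_distrib power2_eq_square[symmetric])
  moreover have "A *\<^sub>v v = e \<cdot>\<^sub>v v"
    unfolding v_def using w(1) A Aw by (simp add: mult_mat_vec smult_smult_assoc mult.commute)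
  ultimately show ?thesis using that by blast
qed

lemma householder_deflation:
  fixes A :: "real mat"
  assumes A: "A \<in> carrier_mat (Suc n) (Suc n)" and sym: "A\<^sup>T = A"
    and v: "v \<in> carrier_vec (Suc n)" "v \<bullet> v = 1" and Av: "A *\<^sub>v v = e \<cdot>\<^sub>v v"
  shows "\<exists>A'. A' \<in> carrier_mat n n \<and> A'\<^sup>T = A' \<and>
    householder (Suc n) v * A * householder (Suc n) v = four_block_mat (mat 1 1 (\<lambda>_. e)) (0\<^sub>m 1 n) (0\<^sub>m n 1) A'"
proof -
  define H where "H = householder (Suc n) v"
  define M where "M = H * A * H"
  have H: "H \<in> carrier_mat (Suc n) (Suc n)" unfolding H_def by simp
  have M: "M \<in> carrier_mat (Suc n) (Suc n)" unfolding M_def using H A by auto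
  have "M = H * (A * H)" unfolding M_def using H A by simp
  hence MT: "M\<^sup>T = M"
    using transpose_mult[OF H mult_carrier_mat[OF A H]] transpose_mult[OF A H] H A sym
    unfolding H_def by simp
  hence symM: "M $$ (i, j) = M $$ (j, i)" if "i < Suc n" "j < Suc n" for i j
    using that M by (metis MT index_transpose_mat(1) carrier_matD(1,2))
  have "H *\<^sub>v v = col (H * H) 0"
    using col_mult2[OF H H, of 0] col_householder_0[OF v] unfolding H_def by simp
  hence Hv: "H *\<^sub>v v = unit_vec (Suc n) 0" using householder_mult_self unfolding H_def by simp
  have "col M 0 = (H * A) *\<^sub>v col H 0"
    unfolding M_def using col_mult2[OF mult_carrier_mat[OF H A] H, of 0] by simp
  also have "\<dots> = H *\<^sub>v (A *\<^sub>v v)"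
    using assoc_mult_mat_vec[OF H A v(1)] col_householder_0[OF v] unfolding H_def by simp
  also have "\<dots> = e \<cdot>\<^sub>v unit_vec (Suc n) 0" using Av H v Hv by (simp add: mult_mat_vec)
  finally have colM: "col M 0 = e \<cdot>\<^sub>v unit_vec (Suc n) 0" .
  have col0: "M $$ (i, 0) = (if i = 0 then e else 0)" if "i < Suc n" for i
    using arg_cong[OF colM, of "\<lambda>x. x $ i"] that M by auto
  have row0: "M $$ (0, j) = (if j = 0 then e else 0)" if "j < Suc n" for j
    using symM[of 0 j] col0[OF that] that by simp
  define A' where "A' = mat n n (\<lambda>(i, j). M $$ (Suc i, Suc j))"
  have "M = four_block_mat (mat 1 1 (\<lambda>_. e)) (0\<^sub>m 1 n) (0\<^sub>m n 1) A'"
    unfolding A'_def using M col0 row0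
    by (intro eq_matI) (auto simp: less_Suc_eq_0_disj)
  moreover have "A'\<^sup>T = A'" unfolding A'_def using symM by (intro eq_matI) auto
  moreover have "A' \<in> carrier_mat n n" unfolding A'_def by simp
  ultimately show ?thesis unfolding M_def H_def by blast
qed

lemma orthogonal_block_extension:
  fixes U' A' :: "real mat"
  assumes U': "U' \<in> carrier_mat n n" "U'\<^sup>T * U' = 1\<^sub>m n" and A': "A' \<in> carrier_mat n n"
  defines "B \<equiv> four_block_mat (1\<^sub>m 1) (0\<^sub>m 1 n) (0\<^sub>m n 1) U'"
  shows "B \<in> carrier_mat (Suc n) (Suc n)" and "B\<^sup>T * B = 1\<^sub>m (Suc n)"
    and "B\<^sup>T * four_block_mat (mat 1 1 (\<lambda>_. e)) (0\<^sub>m 1 n) (0\<^sub>m n 1) A' * B =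
      four_block_mat (mat 1 1 (\<lambda>_. e)) (0\<^sub>m 1 n) (0\<^sub>m n 1) (U'\<^sup>T * A' * U')"
proof -
  show "B \<in> carrier_mat (Suc n) (Suc n)" unfolding B_def using U' by auto
  have BT: "B\<^sup>T = four_block_mat (1\<^sub>m 1) (0\<^sub>m 1 n) (0\<^sub>m n 1) U'\<^sup>T"
    unfolding B_def using U' by (subst transpose_four_block_mat) auto
  show "B\<^sup>T * B = 1\<^sub>m (Suc n)"
    unfolding BT unfolding B_def using U' by (subst mult_four_block_mat[of _ 1 1 _ n _ n]) auto
  have BA: "B\<^sup>T * four_block_mat (mat 1 1 (\<lambda>_. e)) (0\<^sub>m 1 n) (0\<^sub>m n 1) A' =
      four_block_mat (mat 1 1 (\<lambda>_. e)) (0\<^sub>m 1 n) (0\<^sub>m n 1) (U'\<^sup>T * A')"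
    unfolding BT using U' A' by (subst mult_four_block_mat[of _ 1 1 _ n _ n]) auto
  show "B\<^sup>T * four_block_mat (mat 1 1 (\<lambda>_. e)) (0\<^sub>m 1 n) (0\<^sub>m n 1) A' * B =
      four_block_mat (mat 1 1 (\<lambda>_. e)) (0\<^sub>m 1 n) (0\<^sub>m n 1) (U'\<^sup>T * A' * U')"
    unfolding BA unfolding B_def using U' A' by (subst mult_four_block_mat[of _ 1 1 _ n _ n]) auto
qed

theorem symmetric_mat_orthogonally_diagonalizable:
  fixes A :: "real mat"
  assumes "A \<in> carrier_mat n n" and "A\<^sup>T = A"
  shows "\<exists>U. U \<in> carrier_mat n n \<and> U\<^sup>T * U = 1\<^sub>m n \<and> diagonal_mat (U\<^sup>T * A * U)"
  using assms
proof (induction n arbitrary: A)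
  case 0
  show ?case by (rule exI[of _ "1\<^sub>m 0"]) (use 0 in \<open>auto simp: diagonal_mat_def\<close>)
next
  case (Suc n)
  note A = Suc.prems(1) and sym = Suc.prems(2)
  obtain e v where v: "v \<in> carrier_vec (Suc n)" "v \<bullet> v = 1" and Av: "A *\<^sub>v v = e \<cdot>\<^sub>v v"
    using symmetric_mat_has_unit_eigenvector[OF A sym] by blast
  define H where "H = householder (Suc n) v"
  have H: "H \<in> carrier_mat (Suc n) (Suc n)" "H\<^sup>T = H" "H * H = 1\<^sub>m (Suc n)"
    unfolding H_def by (simp_all add: householder_mult_self)
  obtain A' where A': "A' \<in> carrier_mat n n" "A'\<^sup>T = A'"
    and HAH: "H * A * H = four_block_mat (mat 1 1 (\<lambda>_. e)) (0\<^sub>m 1 n) (0\<^sub>m n 1) A'"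
    using householder_deflation[OF A sym v Av] unfolding H_def by blast
  obtain U' where U': "U' \<in> carrier_mat n n" "U'\<^sup>T * U' = 1\<^sub>m n" and diag: "diagonal_mat (U'\<^sup>T * A' * U')"
    using Suc.IH[OF A'] by blast
  define B where "B = four_block_mat (1\<^sub>m 1) (0\<^sub>m 1 n) (0\<^sub>m n 1) U'"
  note B = orthogonal_block_extension[OF U' A'(1), folded B_def]
  define U where "U = H * B"
  have UT: "U\<^sup>T = B\<^sup>T * H" unfolding U_def using H B by (simp add: transpose_mult)
  have "H * (H * B) = B" using assoc_mult_mat[OF H(1) H(1) B(1)] H(3) B by simp
  hence "U\<^sup>T * U = 1\<^sub>m (Suc n)"
    unfolding UT unfolding U_def
    using assoc_mult_mat[OF transpose_carrier_mat[THEN iffD2, OF B(1)] H(1) mult_carrier_mat[OF H(1) B(1)]] B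
    by simp
  moreover have "U\<^sup>T * A * U = B\<^sup>T * (H * A * H) * B"
    unfolding UT unfolding U_def
    using H B A by (simp add: assoc_mult_mat[of _ "Suc n" "Suc n" _ "Suc n" _ "Suc n"])
  moreover have "diagonal_mat (B\<^sup>T * (H * A * H) * B)"
    unfolding HAH B(3) using diag U' A' unfolding diagonal_mat_def by auto
  moreover have "U \<in> carrier_mat (Suc n) (Suc n)" unfolding U_def using H B by auto
  ultimately show ?case by metis
qed

section \<open>Rayleigh quotient bounds\<close>

lemma proots_prod_linear_factors: "proots (\<Prod>a\<leftarrow>es. [:- a, 1:]) = mset (es :: 'a :: idom list)"
proof (induction es)
  case (Cons a es)
  have "proots ([:- a, 1:] * (\<Prod>a\<leftarrow>es. [:- a, 1:])) = {#a#} + mset es"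
    using Cons by (subst proots_mult) (auto simp: prod_list_zero_iff)
  thus ?case by simp
qed simp

lemma eigenvalues_desc_orthogonally_diagonalized:
  fixes A :: "real mat"
  assumes A: "A \<in> carrier_mat n n" and U: "U \<in> carrier_mat n n" "U\<^sup>T * U = 1\<^sub>m n"
    and diag: "diagonal_mat (U\<^sup>T * A * U)"
  shows "eigenvalues_desc A = rev (sort (diag_mat (U\<^sup>T * A * U)))"
proof -
  have UUT: "U * U\<^sup>T = 1\<^sub>m n" using mat_mult_left_right_inverse[of "U\<^sup>T" n U] U by simp
  have "U * (U\<^sup>T * A * U) * U\<^sup>T = (U * U\<^sup>T) * A * (U * U\<^sup>T)"
    using A U by (simp add: assoc_mult_mat[of _ n n _ n _ n])
  hence "similar_mat A (U\<^sup>T * A * U)"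
    unfolding similar_mat_def similar_mat_wit_def using A U UUT
    by (intro exI[of _ U] exI[of _ "U\<^sup>T"]) (auto simp: Let_def)
  hence "char_poly A = char_poly (U\<^sup>T * A * U)" by (rule char_poly_similar)
  also have "\<dots> = (\<Prod>a\<leftarrow>diag_mat (U\<^sup>T * A * U). [:- a, 1:])"
    using diag A U by (intro char_poly_upper_triangular[of _ n]) (auto simp: diagonal_mat_def upper_triangular_def)
  finally have "char_poly A = (\<Prod>a\<leftarrow>diag_mat (U\<^sup>T * A * U). [:- a, 1:])" .
  thus ?thesis unfolding eigenvalues_desc_def by (simp add: proots_prod_linear_factors)
qed

definition second_largest :: "'a :: linorder list \<Rightarrow> 'a" where
  "second_largest xs = rev (sort xs) ! 1"

lemma second_largest_in_set:
  assumes "2 \<le> length xs"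
  shows "second_largest xs \<in> set xs"
  using assms unfolding second_largest_def by (metis Suc_1 Suc_le_lessD length_rev length_sort nth_mem set_rev set_sort)

lemma card_greater_second_largest_le_1:
  "card {i. i < length xs \<and> second_largest xs < xs ! i} \<le> 1"
proof -
  let ?L = "rev (sort xs)" and ?m = "second_largest xs"
  have "card {i. i < length xs \<and> ?m < xs ! i} = length (filter (\<lambda>x. ?m < x) xs)"
    by (simp add: length_filter_conv_card)
  also have "\<dots> = length (filter (\<lambda>x. ?m < x) ?L)"
    by (metis mset_filter mset_rev mset_sort size_mset)
  also have "\<dots> = card {j. j < length ?L \<and> ?m < ?L ! j}"
    by (simp add: length_filter_conv_card)
  also have "\<dots> \<le> card {0 :: nat}"
  proof (rule card_mono)
    have "?L ! j \<le> ?m" if "1 \<le> j" "j < length ?L" for j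
      using that sorted_wrt_nth_less[of "(\<ge>)" ?L 1 j]
      by (cases "j = 1") (auto simp: sorted_wrt_rev second_largest_def)
    thus "{j. j < length ?L \<and> ?m < ?L ! j} \<subseteq> {0}" by (auto simp: not_less[symmetric])
  qed simp
  finally show ?thesis by simp
qed

lemma weighted_sum_squares_le_second_largest:
  fixes d :: "real list" and y z :: "nat \<Rightarrow> real"
  assumes top: "\<And>i. i < length d \<Longrightarrow> d ! i \<le> s"
    and eig: "\<And>i. i < length d \<Longrightarrow> d ! i * z i = s * z i"
    and nz: "\<exists>i < length d. z i \<noteq> 0"
    and orth: "(\<Sum>i<length d. y i * z i) = 0"
  shows "(\<Sum>i<length d. d ! i * (y i)\<^sup>2) \<le> second_largest d * (\<Sum>i<length d. (y i)\<^sup>2)"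
proof -
  \<comment> \<open>At most one weight exceeds m; it must be the top weight s, and y vanishes at its index.\<close>
  define m where "m = second_largest d"
  have single: "i = j" if "i < length d" "m < d ! i" "j < length d" "m < d ! j" for i j
  proof -
    have "card {i. i < length d \<and> m < d ! i} \<le> 1"
      unfolding m_def by (rule card_greater_second_largest_le_1)
    thus ?thesis using that by (auto simp: card_le_Suc0_iff_eq)
  qed
  have "(d ! i - m) * (y i)\<^sup>2 \<le> 0" if i: "i < length d" for i
  proof (cases "m < d ! i")
    case True
    obtain j where j: "j < length d" "z j \<noteq> 0" using nz by blast
    have "d ! j = s" using eig[OF j(1)] j(2) by simp
    hence "j = i" using single[OF i True j(1)] top[OF i] True by force
    hence "d ! i = s" using \<open>d ! j = s\<close> by simp
    have "z k = 0" if "k < length d" "k \<noteq> i" for k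
    proof -
      have "d ! k \<noteq> s" using single[OF i True that(1)] that(2) \<open>d ! i = s\<close> True by force
      thus ?thesis using eig[OF that(1)] by simp
    qed
    hence "(\<Sum>k<length d. y k * z k) = y i * z i" using i by (subst sum.remove[of _ i]) auto
    hence "y i = 0" using orth j \<open>j = i\<close> by simp
    thus ?thesis by simp
  qed (simp add: mult_nonpos_nonneg)
  hence "(\<Sum>i<length d. (d ! i - m) * (y i)\<^sup>2) \<le> 0" by (intro sum_nonpos) simp
  thus ?thesis unfolding m_def[symmetric]
    by (simp add: left_diff_distrib sum_subtractf sum_distrib_left)
qed

lemma scalar_prod_self_eq_sum_squares:
  fixes x :: "real vec"
  assumes "x \<in> carrier_vec n"
  shows "x \<bullet> x = (\<Sum>k<n. (x $ k)\<^sup>2)"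
  using assms by (simp add: scalar_prod_def atLeast0LessThan power2_eq_square)

lemma diagonal_mat_mult_vec_index:
  fixes D :: "real mat"
  assumes D: "D \<in> carrier_mat n n" "diagonal_mat D" and y: "y \<in> carrier_vec n" and k: "k < n"
  shows "(D *\<^sub>v y) $ k = D $$ (k, k) * y $ k"
proof -
  have "(D *\<^sub>v y) $ k = (\<Sum>j<n. D $$ (k, j) * y $ j)"
    using D y k by (simp add: scalar_prod_def atLeast0LessThan)
  also have "\<dots> = D $$ (k, k) * y $ k"
    using D k by (subst sum.remove[of _ k]) (auto simp: diagonal_mat_def intro!: sum.neutral)
  finally show ?thesis .
qed

lemma orthogonal_mat_mult_transpose_vec:
  fixes U :: "real mat"
  assumes U: "U \<in> carrier_mat n n" "U * U\<^sup>T = 1\<^sub>m n" and x: "x \<in> carrier_vec n"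
  shows "U *\<^sub>v (U\<^sup>T *\<^sub>v x) = x"
  using assoc_mult_mat_vec[of U n n "U\<^sup>T" n x] U x by simp

lemma scalar_prod_orthogonal_coordinates:
  fixes U :: "real mat"
  assumes U: "U \<in> carrier_mat n n" "U * U\<^sup>T = 1\<^sub>m n" and x: "x \<in> carrier_vec n" and w: "w \<in> carrier_vec n"
  shows "(U\<^sup>T *\<^sub>v x) \<bullet> (U\<^sup>T *\<^sub>v w) = x \<bullet> w"
  using transpose_vec_mult_scalar[of "U\<^sup>T" n n w "U\<^sup>T *\<^sub>v x"] orthogonal_mat_mult_transpose_vec[OF U x] U x w
  by simp

lemma orthogonal_conjugate_mult_vec:
  fixes A U :: "real mat"
  assumes A: "A \<in> carrier_mat n n" and U: "U \<in> carrier_mat n n" "U * U\<^sup>T = 1\<^sub>m n"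
    and x: "x \<in> carrier_vec n"
  shows "(U\<^sup>T * A * U) *\<^sub>v (U\<^sup>T *\<^sub>v x) = U\<^sup>T *\<^sub>v (A *\<^sub>v x)"
  using A U x orthogonal_mat_mult_transpose_vec[OF U x] by (simp add: assoc_mult_mat_vec[of _ n n _ n])

lemma symmetric_mat_eigen_coordinates:
  fixes A :: "real mat"
  assumes A: "A \<in> carrier_mat n n" and sym: "A\<^sup>T = A"
  obtains U d where "U \<in> carrier_mat n n" "U * U\<^sup>T = 1\<^sub>m n" "length d = n"
    "second_largest_eigenvalue A = second_largest d"
    "\<And>x k. x \<in> carrier_vec n \<Longrightarrow> k < n \<Longrightarrow> (U\<^sup>T *\<^sub>v (A *\<^sub>v x)) $ k = d ! k * (U\<^sup>T *\<^sub>v x) $ k"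
    "\<And>x. x \<in> carrier_vec n \<Longrightarrow> x \<bullet> (A *\<^sub>v x) = (\<Sum>k<n. d ! k * ((U\<^sup>T *\<^sub>v x) $ k)\<^sup>2)"
    "\<And>x. x \<in> carrier_vec n \<Longrightarrow> x \<bullet> x = (\<Sum>k<n. ((U\<^sup>T *\<^sub>v x) $ k)\<^sup>2)"
    "\<And>k. k < n \<Longrightarrow> \<exists>x \<in> carrier_vec n. x \<bullet> x = 1 \<and> x \<bullet> (A *\<^sub>v x) = d ! k"
proof -
  obtain U where U: "U \<in> carrier_mat n n" "U\<^sup>T * U = 1\<^sub>m n" and diag: "diagonal_mat (U\<^sup>T * A * U)"
    using symmetric_mat_orthogonally_diagonalizable[OF A sym] by blast
  define D where "D = U\<^sup>T * A * U"
  define d where "d = diag_mat D"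
  have D: "D \<in> carrier_mat n n" unfolding D_def using A U by auto
  have len: "length d = n" unfolding d_def diag_mat_def using D by simp
  have UUT: "U * U\<^sup>T = 1\<^sub>m n" using mat_mult_left_right_inverse[of "U\<^sup>T" n U] U by simp
  have l2: "second_largest_eigenvalue A = second_largest d"
    unfolding second_largest_eigenvalue_def second_largest_def d_def D_def
    using eigenvalues_desc_orthogonally_diagonalized[OF A U diag] by simp
  have coord: "(U\<^sup>T *\<^sub>v (A *\<^sub>v x)) $ k = d ! k * (U\<^sup>T *\<^sub>v x) $ k"
    if x: "x \<in> carrier_vec n" and k: "k < n" for x k
    using diagonal_mat_mult_vec_index[OF D diag[folded D_def], of "U\<^sup>T *\<^sub>v x" k] U x k D
    unfolding D_def orthogonal_conjugate_mult_vec[OF A U(1) UUT x] d_def diag_mat_def by simp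
  have norm: "x \<bullet> x = (\<Sum>k<n. ((U\<^sup>T *\<^sub>v x) $ k)\<^sup>2)" if x: "x \<in> carrier_vec n" for x
    using scalar_prod_orthogonal_coordinates[OF U(1) UUT x x] scalar_prod_self_eq_sum_squares[of "U\<^sup>T *\<^sub>v x" n] U x
    by simp
  have form: "x \<bullet> (A *\<^sub>v x) = (\<Sum>k<n. d ! k * ((U\<^sup>T *\<^sub>v x) $ k)\<^sup>2)" if x: "x \<in> carrier_vec n" for x
    using scalar_prod_orthogonal_coordinates[OF U(1) UUT x, of "A *\<^sub>v x"] A U x coord[OF x]
    by (simp add: scalar_prod_def atLeast0LessThan power2_eq_square mult_ac)
  have eigen: "\<exists>x \<in> carrier_vec n. x \<bullet> x = 1 \<and> x \<bullet> (A *\<^sub>v x) = d ! k" if k: "k < n" for k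
  proof
    have ek: "U\<^sup>T *\<^sub>v (U *\<^sub>v unit_vec n k) = unit_vec n k"
      using assoc_mult_mat_vec[of "U\<^sup>T" n n U n "unit_vec n k"] U by simp
    show e: "U *\<^sub>v unit_vec n k \<in> carrier_vec n" using U by simp
    show "(U *\<^sub>v unit_vec n k) \<bullet> (U *\<^sub>v unit_vec n k) = 1 \<and>
        (U *\<^sub>v unit_vec n k) \<bullet> (A *\<^sub>v (U *\<^sub>v unit_vec n k)) = d ! k"
      unfolding norm[OF e] form[OF e] ek
      using k by (simp add: if_distrib[of "\<lambda>x. x\<^sup>2"] if_distrib[of "\<lambda>x. _ * x"] cong: if_cong)
  qed
  show ?thesis using that[OF U(1) UUT len l2 coord form norm eigen] .
qed

theorem second_largest_eigenvalue_le:
  fixes A :: "real mat"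
  assumes A: "A \<in> carrier_mat n n" and sym: "A\<^sup>T = A" and n: "2 \<le> n"
    and top: "\<And>x. x \<in> carrier_vec n \<Longrightarrow> x \<bullet> (A *\<^sub>v x) \<le> s * (x \<bullet> x)"
  shows "second_largest_eigenvalue A \<le> s"
proof (rule symmetric_mat_eigen_coordinates[OF A sym])
  fix U d
  assume len: "length d = n" and l2: "second_largest_eigenvalue A = second_largest d"
    and eigen: "\<And>k. k < n \<Longrightarrow> \<exists>x \<in> carrier_vec n. x \<bullet> x = 1 \<and> x \<bullet> (A *\<^sub>v x) = d ! k"
  have "d ! k \<le> s" if k: "k < n" for k
  proof -
    obtain x where "x \<in> carrier_vec n" "x \<bullet> x = 1" "x \<bullet> (A *\<^sub>v x) = d ! k" using eigen[OF k] by blast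
    thus ?thesis using top[of x] by simp
  qed
  thus ?thesis unfolding l2 using second_largest_in_set[of d] len n by (metis in_set_conv_nth)
qed

theorem quadratic_form_le_second_largest_eigenvalue_orthogonal:
  fixes A :: "real mat"
  assumes A: "A \<in> carrier_mat n n" and sym: "A\<^sup>T = A"
    and z: "z \<in> carrier_vec n" "z \<noteq> 0\<^sub>v n" and Az: "A *\<^sub>v z = s \<cdot>\<^sub>v z"
    and top: "\<And>x. x \<in> carrier_vec n \<Longrightarrow> x \<bullet> (A *\<^sub>v x) \<le> s * (x \<bullet> x)"
    and x: "x \<in> carrier_vec n" and xz: "x \<bullet> z = 0"
  shows "x \<bullet> (A *\<^sub>v x) \<le> second_largest_eigenvalue A * (x \<bullet> x)"
proof (rule symmetric_mat_eigen_coordinates[OF A sym])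
  fix U d
  assume U: "U \<in> carrier_mat n n" "U * U\<^sup>T = 1\<^sub>m n" and len: "length d = n"
    and l2: "second_largest_eigenvalue A = second_largest d"
    and coord: "\<And>x k. x \<in> carrier_vec n \<Longrightarrow> k < n \<Longrightarrow> (U\<^sup>T *\<^sub>v (A *\<^sub>v x)) $ k = d ! k * (U\<^sup>T *\<^sub>v x) $ k"
    and form: "\<And>x. x \<in> carrier_vec n \<Longrightarrow> x \<bullet> (A *\<^sub>v x) = (\<Sum>k<n. d ! k * ((U\<^sup>T *\<^sub>v x) $ k)\<^sup>2)"
    and norm: "\<And>x. x \<in> carrier_vec n \<Longrightarrow> x \<bullet> x = (\<Sum>k<n. ((U\<^sup>T *\<^sub>v x) $ k)\<^sup>2)"
    and eigen: "\<And>k. k < n \<Longrightarrow> \<exists>x \<in> carrier_vec n. x \<bullet> x = 1 \<and> x \<bullet> (A *\<^sub>v x) = d ! k"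
  define z' where "z' = U\<^sup>T *\<^sub>v z"
  have d_le: "d ! k \<le> s" if k: "k < length d" for k
  proof -
    obtain y where "y \<in> carrier_vec n" "y \<bullet> y = 1" "y \<bullet> (A *\<^sub>v y) = d ! k"
      using eigen k len by blast
    thus ?thesis using top[of y] by simp
  qed
  have d_eig: "d ! k * z' $ k = s * z' $ k" if "k < length d" for k
    using coord[OF z(1), of k] that len U z unfolding z'_def Az by auto
  have z'_nz: "\<exists>k < length d. z' $ k \<noteq> 0"
  proof (rule ccontr)
    assume "\<not> ?thesis"
    hence "z' = 0\<^sub>v n" using U z len unfolding z'_def by (intro eq_vecI) auto
    hence "U *\<^sub>v z' = 0\<^sub>v n" using U by auto
    thus False using orthogonal_mat_mult_transpose_vec[OF U z(1)] z(2) unfolding z'_def by simp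
  qed
  have "(\<Sum>k<length d. (U\<^sup>T *\<^sub>v x) $ k * z' $ k) = 0"
    using scalar_prod_orthogonal_coordinates[OF U x z(1)] xz U len
    unfolding z'_def by (simp add: scalar_prod_def atLeast0LessThan)
  from weighted_sum_squares_le_second_largest[OF d_le d_eig z'_nz this]
  show ?thesis unfolding l2 form[OF x] norm[OF x] len .
qed

lemma quadratic_form_le_second_largest_eigenvalue:
  fixes A :: "real mat"
  assumes A: "A \<in> carrier_mat n n" and sym: "A\<^sup>T = A"
    and z: "z \<in> carrier_vec n" "z \<noteq> 0\<^sub>v n" and Az: "A *\<^sub>v z = s \<cdot>\<^sub>v z"
    and top: "\<And>x. x \<in> carrier_vec n \<Longrightarrow> x \<bullet> (A *\<^sub>v x) \<le> s * (x \<bullet> x)"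
    and w: "w \<in> carrier_vec n"
  shows "w \<bullet> (A *\<^sub>v w) \<le>
    second_largest_eigenvalue A * (w \<bullet> w) + (s - second_largest_eigenvalue A) * (w \<bullet> z)\<^sup>2 / (z \<bullet> z)"
proof -
  define l where "l = second_largest_eigenvalue A"
  define p where "p = w \<bullet> z"
  define q where "q = z \<bullet> z"
  define x where "x = w - (p / q) \<cdot>\<^sub>v z"
  have q: "0 < q" unfolding q_def using conjugate_square_greater_0_vec[OF z(1)] z(2) by simp
  have x: "x \<in> carrier_vec n" unfolding x_def using w z by simp
  have zw: "z \<bullet> w = p" unfolding p_def using comm_scalar_prod[OF z(1) w] by simp
  have zAw: "z \<bullet> (A *\<^sub>v w) = s * p"
    using transpose_vec_mult_scalar[OF A w z(1)] sym Az z(1) w zw by simp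
  have "x \<bullet> z = 0"
    unfolding x_def using w z q by (simp add: minus_scalar_prod_distrib p_def q_def[symmetric])
  hence "x \<bullet> (A *\<^sub>v x) \<le> l * (x \<bullet> x)"
    unfolding l_def using quadratic_form_le_second_largest_eigenvalue_orthogonal[OF A sym z Az top x] by simp
  moreover have "x \<bullet> (A *\<^sub>v x) = w \<bullet> (A *\<^sub>v w) - s * p\<^sup>2 / q"
    unfolding x_def using A w z q zw zAw Az
    by (simp add: mult_minus_distrib_mat_vec mult_mat_vec minus_scalar_prod_distrib
        scalar_prod_minus_distrib p_def[symmetric] q_def[symmetric] field_simps power2_eq_square)
  moreover have "x \<bullet> x = w \<bullet> w - p\<^sup>2 / q"
    unfolding x_def using w z q zw
    by (simp add: minus_scalar_prod_distrib scalar_prod_minus_distrib p_def[symmetric]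
        q_def[symmetric] field_simps power2_eq_square)
  ultimately have "w \<bullet> (A *\<^sub>v w) - s * p\<^sup>2 / q \<le> l * (w \<bullet> w) - l * (p\<^sup>2 / q)"
    by (simp add: right_diff_distrib)
  moreover have "(s - l) * p\<^sup>2 / q = s * p\<^sup>2 / q - l * (p\<^sup>2 / q)"
    by (simp add: left_diff_distrib diff_divide_distrib)
  ultimately show ?thesis unfolding l_def[symmetric] p_def[symmetric] q_def[symmetric] by linarith
qed

section \<open>Regular graphs\<close>

lemma sum_sum_indicator_eq_card:
  fixes n :: nat
  shows "(\<Sum>i<n. \<Sum>j<n. if P i j then 1 else 0 :: real) = real (card {(i, j). i < n \<and> j < n \<and> P i j})"
proof -
  have "(\<Sum>i<n. \<Sum>j<n. if P i j then 1 else 0 :: real) =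
      (\<Sum>p\<in>{..<n} \<times> {..<n}. if P (fst p) (snd p) then 1 else 0)"
    by (simp add: sum.cartesian_product case_prod_beta)
  also have "\<dots> = (\<Sum>p\<in>{p \<in> {..<n} \<times> {..<n}. P (fst p) (snd p)}. 1)"
    by (intro sum.inter_filter[symmetric]) simp
  also have "{p \<in> {..<n} \<times> {..<n}. P (fst p) (snd p)} = {(i, j). i < n \<and> j < n \<and> P i j}" by auto
  finally show ?thesis by simp
qed

lemma card_ordered_pairs_of_doubletons:
  assumes "finite E" and "\<And>e. e \<in> E \<Longrightarrow> \<exists>u v. u \<noteq> v \<and> e = {u, v}"
  shows "card {(u, v). {u, v} \<in> E} = 2 * card E"
proof -
  have pairs: "card {(u, v). {u, v} = e} = 2" if e: "e \<in> E" for e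
  proof -
    obtain a b where "a \<noteq> b" "e = {a, b}" using assms(2)[OF e] by blast
    hence "{(u, v). {u, v} = e} = {(a, b), (b, a)}" by (auto simp: doubleton_eq_iff)
    thus ?thesis using \<open>a \<noteq> b\<close> by simp
  qed
  have "{(u, v). {u, v} \<in> E} = (\<Union>e\<in>E. {(u, v). {u, v} = e})" by auto
  also have "card \<dots> = (\<Sum>e\<in>E. card {(u, v). {u, v} = e})"
    using assms(1) pairs by (intro card_UN_disjoint) (auto intro: card_ge_0_finite)
  finally show ?thesis using pairs by simp
qed

lemma adjacency_matrix_carrier [simp]: "adjacency_matrix n adj \<in> carrier_mat n n"
  unfolding adjacency_matrix_def by simp

lemma adjacency_matrix_quadratic_form:
  assumes "x \<in> carrier_vec n"
  shows "x \<bullet> (adjacency_matrix n adj *\<^sub>v x) =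
    (\<Sum>i<n. \<Sum>j<n. (if adj i j then 1 else 0) * x $ i * x $ j)"
  using assms by (simp add: adjacency_matrix_def scalar_prod_def atLeast0LessThan sum_distrib_left
      mult.commute mult.left_commute)

context
  fixes n :: nat and adj :: "nat \<Rightarrow> nat \<Rightarrow> bool"
  assumes simple: "simple_graph n adj"
begin

lemma adj_sym: "adj u v \<Longrightarrow> adj v u" and adj_less: "adj u v \<Longrightarrow> u < n \<and> v < n"
  and adj_irrefl: "\<not> adj u u"
  using simple unfolding simple_graph_def by blast+

lemma adj_commute: "adj u v \<longleftrightarrow> adj v u"
  using adj_sym by blast

lemma transpose_adjacency_matrix: "(adjacency_matrix n adj)\<^sup>T = adjacency_matrix n adj"
  unfolding adjacency_matrix_def by (intro eq_matI) (auto simp: adj_commute)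

lemma doubleton_mem_graph_edges_iff: "{u, v} \<in> graph_edges n adj \<longleftrightarrow> adj u v"
  unfolding graph_edges_def by (auto simp: doubleton_eq_iff adj_commute dest: adj_less)

lemma graph_edges_doubleton:
  assumes "e \<in> graph_edges n adj"
  shows "\<exists>u v. u \<noteq> v \<and> e = {u, v}"
proof -
  obtain u v where "e = {u, v}" "adj u v" using assms unfolding graph_edges_def by blast
  moreover have "u \<noteq> v" using \<open>adj u v\<close> adj_irrefl by metis
  ultimately show ?thesis by blast
qed

lemma finite_graph_edges: "finite (graph_edges n adj)"
proof (rule finite_subset)
  show "graph_edges n adj \<subseteq> Pow {..<n}" unfolding graph_edges_def by auto
qed simp

lemma card_edges_le_adjacent_pairs_within:
  assumes "E \<subseteq> graph_edges n adj"
  shows "2 * card E \<le> card {(i, j). i \<in> \<Union>E \<and> j \<in> \<Union>E \<and> adj i j}"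
proof -
  have "2 * card E = card {(u, v). {u, v} \<in> E}"
    using assms finite_subset[OF assms finite_graph_edges] graph_edges_doubleton
    by (intro card_ordered_pairs_of_doubletons[symmetric]) auto
  also have "\<dots> \<le> card {(i, j). i \<in> \<Union>E \<and> j \<in> \<Union>E \<and> adj i j}"
  proof (rule card_mono)
    show "finite {(i, j). i \<in> \<Union>E \<and> j \<in> \<Union>E \<and> adj i j}"
      by (rule finite_subset[of _ "{..<n} \<times> {..<n}"]) (auto dest: adj_less)
    show "{(u, v). {u, v} \<in> E} \<subseteq> {(i, j). i \<in> \<Union>E \<and> j \<in> \<Union>E \<and> adj i j}"
      using assms by (auto simp: doubleton_mem_graph_edges_iff[symmetric])
  qed
  finally show ?thesis .
qed

lemma two_le_of_adj:
  assumes "adj u v"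
  shows "2 \<le> n"
proof -
  have "u \<noteq> v" using assms adj_irrefl by metis
  thus ?thesis using adj_less[OF assms] by arith
qed

context
  fixes s :: nat
  assumes regular: "regular_graph n adj s"
begin

lemma degree_sum: "i < n \<Longrightarrow> (\<Sum>j<n. if adj i j then 1 else 0 :: real) = real s"
  using regular unfolding regular_graph_def by (simp add: sum.If_cases Int_def conj_commute)

lemma adjacency_matrix_mult_ones:
  "adjacency_matrix n adj *\<^sub>v vec n (\<lambda>_. 1) = real s \<cdot>\<^sub>v vec n (\<lambda>_. 1)"
  using degree_sum by (intro eq_vecI) (auto simp: adjacency_matrix_def scalar_prod_def atLeast0LessThan)

lemma adjacency_matrix_quadratic_form_le:
  assumes x: "x \<in> carrier_vec n"
  shows "x \<bullet> (adjacency_matrix n adj *\<^sub>v x) \<le> real s * (x \<bullet> x)"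
proof -
  let ?a = "\<lambda>i j. if adj i j then 1 else 0 :: real"
  have "x \<bullet> (adjacency_matrix n adj *\<^sub>v x) = (\<Sum>i<n. \<Sum>j<n. ?a i j * (x $ i * x $ j))"
    using adjacency_matrix_quadratic_form[OF x] by (simp add: mult.assoc)
  also have "\<dots> \<le> (\<Sum>i<n. \<Sum>j<n. ?a i j * (x $ i)\<^sup>2 / 2 + ?a i j * (x $ j)\<^sup>2 / 2)"
  proof (intro sum_mono)
    fix i j
    have "x $ i * x $ j \<le> (x $ i)\<^sup>2 / 2 + (x $ j)\<^sup>2 / 2" using sum_squares_bound[of "x $ i" "x $ j"] by simp
    thus "?a i j * (x $ i * x $ j) \<le> ?a i j * (x $ i)\<^sup>2 / 2 + ?a i j * (x $ j)\<^sup>2 / 2" by auto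
  qed
  also have "\<dots> = (\<Sum>i<n. \<Sum>j<n. ?a i j * (x $ i)\<^sup>2) / 2 + (\<Sum>i<n. \<Sum>j<n. ?a i j * (x $ j)\<^sup>2) / 2"
    by (simp add: sum.distrib sum_divide_distrib)
  also have "(\<Sum>i<n. \<Sum>j<n. ?a i j * (x $ i)\<^sup>2) = (\<Sum>i<n. (\<Sum>j<n. ?a i j) * (x $ i)\<^sup>2)"
    by (simp add: sum_distrib_right)
  also have "(\<Sum>i<n. \<Sum>j<n. ?a i j * (x $ j)\<^sup>2) = (\<Sum>j<n. (\<Sum>i<n. ?a j i) * (x $ j)\<^sup>2)"
    by (subst sum.swap) (simp add: sum_distrib_right adj_commute)
  also have "(\<Sum>i<n. (\<Sum>j<n. ?a i j) * (x $ i)\<^sup>2) = real s * (x \<bullet> x)"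
    using degree_sum by (simp add: scalar_prod_self_eq_sum_squares[OF x] sum_distrib_left)
  finally show ?thesis by simp
qed

lemma card_graph_edges: "2 * real (card (graph_edges n adj)) = real n * real s"
proof -
  have "{(u, v). {u, v} \<in> graph_edges n adj} = {(i, j). i < n \<and> j < n \<and> adj i j}"
    using adj_less by (auto simp: doubleton_mem_graph_edges_iff)
  hence "2 * card (graph_edges n adj) = card {(i, j). i < n \<and> j < n \<and> adj i j}"
    using card_ordered_pairs_of_doubletons[OF finite_graph_edges graph_edges_doubleton] by simp
  hence "2 * real (card (graph_edges n adj)) = (\<Sum>i<n. \<Sum>j<n. if adj i j then 1 else 0)"
    by (simp add: sum_sum_indicator_eq_card)
  thus ?thesis using degree_sum by simp
qed

lemma degree_pos_of_adj:
  assumes "adj u v"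
  shows "0 < s"
proof -
  have "v \<in> {w. w < n \<and> adj u w}" using assms adj_less[OF assms] by simp
  hence "card {w. w < n \<and> adj u w} \<noteq> 0"
    by (metis card_0_eq empty_iff finite_Collect_conjI finite_Collect_less_nat)
  thus ?thesis using regular adj_less[OF assms] unfolding regular_graph_def by simp
qed

theorem card_adjacent_pairs_within_le:
  assumes n: "0 < n" and F: "F \<subseteq> {..<n}"
  defines "l \<equiv> second_largest_eigenvalue (adjacency_matrix n adj)"
  shows "real (card {(i, j). i \<in> F \<and> j \<in> F \<and> adj i j}) \<le>
    l * real (card F) + (real s - l) * (real (card F))\<^sup>2 / real n"
proof -
  define w where "w = vec n (\<lambda>i. if i \<in> F then 1 else 0 :: real)"
  define one where "one = vec n (\<lambda>_. 1 :: real)"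
  have w: "w \<in> carrier_vec n" and one: "one \<in> carrier_vec n" "one \<noteq> 0\<^sub>v n"
    unfolding w_def one_def using n by (auto simp: vec_eq_iff intro!: exI[of _ 0])
  have sum_F: "(\<Sum>i<n. if i \<in> F then 1 else 0 :: real) = real (card F)"
    using F by (simp add: sum.If_cases Int_absorb1)
  have "w \<bullet> (adjacency_matrix n adj *\<^sub>v w) = (\<Sum>i<n. \<Sum>j<n. if i \<in> F \<and> j \<in> F \<and> adj i j then 1 else 0)"
    unfolding adjacency_matrix_quadratic_form[OF w] unfolding w_def by (intro sum.cong refl) auto
  also have "\<dots> = real (card {(i, j). i \<in> F \<and> j \<in> F \<and> adj i j})"
    unfolding sum_sum_indicator_eq_card using F by (intro arg_cong[of _ _ "\<lambda>X. real (card X)"]) auto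
  finally have "real (card {(i, j). i \<in> F \<and> j \<in> F \<and> adj i j}) = w \<bullet> (adjacency_matrix n adj *\<^sub>v w)" ..
  also have "\<dots> \<le> l * (w \<bullet> w) + (real s - l) * (w \<bullet> one)\<^sup>2 / (one \<bullet> one)"
    unfolding l_def
    by (rule quadratic_form_le_second_largest_eigenvalue[OF adjacency_matrix_carrier transpose_adjacency_matrix
          one adjacency_matrix_mult_ones[folded one_def] adjacency_matrix_quadratic_form_le w])
  also have "w \<bullet> w = real (card F)"
    unfolding w_def using sum_F
    by (simp add: scalar_prod_def atLeast0LessThan if_distrib[of "\<lambda>x. x * _"] cong: if_cong)
  also have "w \<bullet> one = real (card F)" unfolding w_def one_def using sum_F by (simp add: scalar_prod_def atLeast0LessThan)
  also have "one \<bullet> one = real n" unfolding one_def by (simp add: scalar_prod_def)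
  finally show ?thesis .
qed

end

end

section \<open>Vertex expansion\<close>

lemma quadratic_positive_root_le:
  fixes c l t :: real
  assumes c: "0 < c" and t: "0 \<le> t" and q: "4 \<le> c * t\<^sup>2 + 2 * l * t"
  shows "(sqrt (l\<^sup>2 + 4 * c) - l) / c \<le> t"
proof (rule ccontr)
  define D where "D = sqrt (l\<^sup>2 + 4 * c)"
  assume "\<not> ?thesis"
  hence "c * t + l < D" using c unfolding D_def[symmetric] by (simp add: field_simps)
  moreover have "\<bar>l\<bar> < D"
    unfolding D_def using c real_sqrt_less_mono[of "l\<^sup>2" "l\<^sup>2 + 4 * c"] by simp
  moreover have "0 \<le> c * t" using c t by simp
  ultimately have "0 < (D - (c * t + l)) * (D + (c * t + l))" by (intro mult_pos_pos) linarith+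
  hence "(c * t + l)\<^sup>2 < D\<^sup>2" by (simp add: power2_eq_square algebra_simps)
  also have "D\<^sup>2 = l\<^sup>2 + 4 * c" unfolding D_def using c by simp
  finally have "c * (c * t\<^sup>2 + 2 * l * t) < c * 4" by (simp add: power2_eq_square algebra_simps)
  thus False using q c by simp
qed

lemma expansion_ratio_bound:
  fixes l s \<alpha> m f N :: real
  assumes m: "0 < m" and N: "0 < N" and \<alpha>: "0 < \<alpha>" and s: "0 < s" and ls: "l < s" and f: "0 \<le> f"
    and within: "2 * m \<le> l * f + (s - l) * f\<^sup>2 / N"
    and total: "2 * m \<le> \<alpha> * (N * s)"
  shows "(sqrt (l\<^sup>2 + 4 * s * (s - l) * \<alpha>) - l) / (s * (s - l) * \<alpha>) * m \<le> f"
proof -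
  define c where "c = s * (s - l) * \<alpha>"
  have c: "0 < c" unfolding c_def using s ls \<alpha> by simp
  have "1 / N \<le> \<alpha> * s / (2 * m)" using total m N by (simp add: field_simps)
  hence "(s - l) * f\<^sup>2 * (1 / N) \<le> (s - l) * f\<^sup>2 * (\<alpha> * s / (2 * m))"
    using ls by (intro mult_left_mono) simp_all
  hence "2 * m \<le> l * f + c * f\<^sup>2 / (2 * m)" using within unfolding c_def by (simp add: field_simps)
  hence "4 \<le> c * (f / m)\<^sup>2 + 2 * l * (f / m)" using m by (simp add: field_simps power2_eq_square)
  from quadratic_positive_root_le[OF c _ this] have "(sqrt (l\<^sup>2 + 4 * c) - l) / c \<le> f / m"
    using f m by simp
  thus ?thesis using m unfolding c_def by (simp add: field_simps)
qed

theorem mainTheorem6: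
  fixes n s :: nat and adj :: "nat \<Rightarrow> nat \<Rightarrow> bool" and \<alpha> :: real and E :: "nat set set"
  assumes "0 < n"
    and "simple_graph n adj"
    and "connected_graph n adj"
    and "regular_graph n adj s"
    and "0 < \<alpha>" and "\<alpha> \<le> 1"
    and "E \<subseteq> graph_edges n adj"
    and "real (card E) \<le> \<alpha> * real (card (graph_edges n adj))"
  shows "let l2 = second_largest_eigenvalue (adjacency_matrix n adj);
             \<beta> = (sqrt (l2\<^sup>2 + 4 * real s * (real s - l2) * \<alpha>) - l2)
                 / (real s * (real s - l2) * \<alpha>)
         in real (card (incident_vertices E)) \<ge> \<beta> * real (card E)"
proof (cases "E = {}")
  case False
  note simple = assms(2) and regular = assms(4) and edges = assms(7)
  define l where "l = second_largest_eigenvalue (adjacency_matrix n adj)"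
  obtain u v where uv: "adj u v" using False edges unfolding graph_edges_def by blast
  have n: "2 \<le> n" and s: "0 < s"
    using two_le_of_adj[OF simple uv] degree_pos_of_adj[OF simple regular uv] .
  have m: "0 < card E" using False finite_subset[OF edges finite_graph_edges[OF simple]] by auto
  have F: "\<Union>E \<subseteq> {..<n}" using edges adj_less[OF simple] unfolding graph_edges_def by blast
  have within: "2 * real (card E) \<le> l * real (card (\<Union>E)) + (real s - l) * (real (card (\<Union>E)))\<^sup>2 / real n"
    using card_edges_le_adjacent_pairs_within[OF simple edges]
      card_adjacent_pairs_within_le[OF simple regular assms(1) F] unfolding l_def by linarith
  have "2 * real (card E) \<le> \<alpha> * (2 * real (card (graph_edges n adj)))" using assms(8) by simp
  hence total: "2 * real (card E) \<le> \<alpha> * (real n * real s)"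
    unfolding card_graph_edges[OF simple regular] .
  \<comment> \<open>If l = s, the denominator of \<beta> vanishes and \<beta> = 0 by division by zero; this is the only
    case excluded by connectivity, which is therefore not needed (nor is \<alpha> \<le> 1).\<close>
  have "l \<le> real s" unfolding l_def
    using second_largest_eigenvalue_le[OF adjacency_matrix_carrier transpose_adjacency_matrix[OF simple] n
        adjacency_matrix_quadratic_form_le[OF simple regular]] .
  thus ?thesis unfolding Let_def incident_vertices_def l_def[symmetric]
    using expansion_ratio_bound[OF _ _ assms(5) _ _ _ within total] m n s by (cases "l = real s") auto
qed simp

end
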